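(* Let $T_1(B_1,C_1)$ and $T_2(B_2,C_2)$ be proper $(2,3)$-poles (with $|B_i|=2$, $|C_i|=3$). Form the $(2,2,1)$-pole $M=\operatorname{TT}(T_1,T_2)$ by performing the junction of $C_1$ and $C_2$ (creating three new edges), choosing one of these three new edges, subdividing it with a new vertex $v$, and attaching to $v$ a new dangling edge with semiedge $r$; the connectors of $M$ are $B_1=\{b,b'\}$, $B_2=\{c,c'\}$ and $\{r\}$. Then every colouring $\varphi$ of $M$ satisfies $\varphi(b)\ne\varphi(b')$, $\varphi(c)\ne\varphi(c')$ and $\varphi(b)+\varphi(b')+\varphi(c)+\varphi(c')+\varphi(r)=0$. Moreover, if $T_1$ and $T_2$ are both perfect, then every $5$-tuple $(a_1,a_2,d_1,d_2,e)\in\mathbb{K}^5$ with $a_1\ne a_2$, $d_1\ne d_2$ and $a_1+a_2+d_1+d_2+e=0$ equals $(\varphi(b),\varphi(b'),\varphi(c),\varphi(c'),\varphi(r))$ for some colouring $\varphi$ of $M$.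
   Context: A multipole consists of vertices and edges; each edge has two ends, each either incident with a vertex or free; a free end is a semiedge. All multipoles are cubic (every vertex is incident with exactly three edge ends; loops and parallel edges allowed). Semiedges are partitioned into connectors; a $(c_1,\dots,c_n)$-pole has $n$ connectors of sizes $c_1,\dots,c_n$. The junction of two semiedges identifies the two free ends into a single edge; the junction of two connectors of equal size performs junctions of their semiedges along an arbitrary bijection. Let $\mathbb{K}=\{(0,1),(1,0),(1,1)\}\subset\mathbb{Z}_2\times\mathbb{Z}_2$. A colouring of a multipole assigns elements of $\mathbb{K}$ to edges so that at every vertex the three incident edge ends get distinct colours (equivalently sum to $0$). The flow through a connector $S$ under $\varphi$ is $\varphi_*(S)=\sum_{e\in S}\varphi(e)\in\mathbb{Z}_2\times\mathbb{Z}_2$. A $(2,3)$-pole $T(B,C)$ is proper if $\varphi_*(B)\ne 0$ and $\varphi_*(C)\neq0$ for every colouring $\varphi$ of $T$. A proper $(2,3)$-pole $T(\{a_1,a_2\},\{b_1,b_2,b_3\})$ is perfect if the set of tuples $(\varphi(a_1),\varphi(a_2),\varphi(b_1),\varphi(b_2),\varphi(b_3))$ over all its colourings equals $\{(x_1,x_2,y_1,y_2,y_3)\in\mathbb{K}^5: x_1+x_2=y_1+y_2+y_3\ne 0\}$. *)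

theory Defs
  imports Main "HOL-Library.Z2" "HOL-Library.Product_Plus"
begin

text \<open>A multipole is given by a set of vertices, a set of darts (edge ends), a partial
  incidence map sending each dart to the vertex it is incident with (None = free end,
  i.e. a semiedge), and a fixed-point-free involution mate pairing the two ends of
  every edge.  Thus each edge is a pair of darts, and loops / parallel edges are allowed.\<close>

record ('v, 'd) multipole =
  verts :: "'v set"
  darts :: "'d set"
  vtx   :: "'d \<Rightarrow> 'v option"
  mate  :: "'d \<Rightarrow> 'd"

definition darts_at :: "('v, 'd) multipole \<Rightarrow> 'v \<Rightarrow> 'd set" where
  "darts_at M v = {d \<in> darts M. vtx M d = Some v}"

definition semiedges :: "('v, 'd) multipole \<Rightarrow> 'd set" where
  "semiedges M = {d \<in> darts M. vtx M d = None}"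

definition wf_multipole :: "('v, 'd) multipole \<Rightarrow> bool" where
  "wf_multipole M \<longleftrightarrow>
     finite (verts M) \<and> finite (darts M) \<and>
     (\<forall>d \<in> darts M. mate M d \<in> darts M \<and> mate M d \<noteq> d \<and> mate M (mate M d) = d) \<and>
     (\<forall>d \<in> darts M. \<forall>v. vtx M d = Some v \<longrightarrow> v \<in> verts M) \<and>
     (\<forall>v \<in> verts M. card (darts_at M v) = 3)"

definition is_pole :: "('v, 'd) multipole \<Rightarrow> 'd list list \<Rightarrow> bool" where
  "is_pole M cs \<longleftrightarrow> wf_multipole M \<and> distinct (concat cs) \<and> set (concat cs) = semiedges M"

text \<open>\<open>\<int>\<^sub>2 \<times> \<int>\<^sub>2\<close> is \<open>bit \<times> bit\<close>; K is the set of its nonzero elements.\<close>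
definition K :: "(bit \<times> bit) set" where
  "K = {(0, 1), (1, 0), (1, 1)}"

text \<open>A colouring assigns a colour from K to every edge (i.e. equal colours to both ends of
  every edge) such that at every vertex the three incident edge ends get distinct colours.\<close>
definition colouring :: "('v, 'd) multipole \<Rightarrow> ('d \<Rightarrow> bit \<times> bit) \<Rightarrow> bool" where
  "colouring M \<phi> \<longleftrightarrow>
     (\<forall>d \<in> darts M. \<phi> d \<in> K \<and> \<phi> (mate M d) = \<phi> d) \<and>
     (\<forall>v \<in> verts M. inj_on \<phi> (darts_at M v))"

definition flow :: "('d \<Rightarrow> bit \<times> bit) \<Rightarrow> 'd list \<Rightarrow> bit \<times> bit" where
  "flow \<phi> S = sum_list (map \<phi> S)"

definition proper23 :: "('v, 'd) multipole \<Rightarrow> 'd list \<Rightarrow> 'd list \<Rightarrow> bool" where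
  "proper23 T B C \<longleftrightarrow> is_pole T [B, C] \<and> length B = 2 \<and> length C = 3 \<and>
     (\<forall>\<phi>. colouring T \<phi> \<longrightarrow> flow \<phi> B \<noteq> 0 \<and> flow \<phi> C \<noteq> 0)"

definition perfect23 :: "('v, 'd) multipole \<Rightarrow> 'd list \<Rightarrow> 'd list \<Rightarrow> bool" where
  "perfect23 T B C \<longleftrightarrow> proper23 T B C \<and>
     {(\<phi> (B!0), \<phi> (B!1), \<phi> (C!0), \<phi> (C!1), \<phi> (C!2)) | \<phi>. colouring T \<phi>} =
     {(x1, x2, y1, y2, y3). x1 \<in> K \<and> x2 \<in> K \<and> y1 \<in> K \<and> y2 \<in> K \<and> y3 \<in> K \<and>
        x1 + x2 = y1 + y2 + y3 \<and> x1 + x2 \<noteq> 0}"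

definition dunion :: "('v1, 'd1) multipole \<Rightarrow> ('v2, 'd2) multipole \<Rightarrow> ('v1 + 'v2, 'd1 + 'd2) multipole" where
  "dunion M N = \<lparr> verts = Inl ` verts M \<union> Inr ` verts N,
                  darts = Inl ` darts M \<union> Inr ` darts N,
                  vtx = case_sum (\<lambda>d. map_option Inl (vtx M d)) (\<lambda>d. map_option Inr (vtx N d)),
                  mate = case_sum (\<lambda>d. Inl (mate M d)) (\<lambda>d. Inr (mate N d)) \<rparr>"

text \<open>Junction of two semiedges s and t: the two free ends are identified, i.e. the darts
  s and t disappear and the remaining ends of their edges become the two ends of one edge.\<close>
definition junction :: "('v, 'd) multipole \<Rightarrow> 'd \<Rightarrow> 'd \<Rightarrow> ('v, 'd) multipole" where
  "junction M s t = M \<lparr> darts := darts M - {s, t},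
                        mate := (mate M)(mate M s := mate M t, mate M t := mate M s) \<rparr>"

definition junctions :: "('v, 'd) multipole \<Rightarrow> ('d \<times> 'd) list \<Rightarrow> ('v, 'd) multipole" where
  "junctions M ps = fold (\<lambda>(s, t) N. junction N s t) ps M"

text \<open>Gadget: a new vertex v (the unique vertex, of type unit) with three incident edges
  SP--SP', SQ--SQ', SR--SR' whose other ends SP', SQ', SR' are free.  Junction of SP' and SQ'
  with the two semiedges forming a new edge is exactly subdividing that new edge by v;
  the edge SR--SR' is the new dangling edge at v, with semiedge r = SR'.\<close>
datatype sdart = SP | SP' | SQ | SQ' | SR | SR'

definition star :: "(unit, sdart) multipole" where
  "star = \<lparr> verts = {()}, darts = UNIV,
            vtx = (\<lambda>d. if d \<in> {SP, SQ, SR} then Some () else None),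
            mate = (\<lambda>d. case d of SP \<Rightarrow> SP' | SP' \<Rightarrow> SP | SQ \<Rightarrow> SQ' | SQ' \<Rightarrow> SQ
                                 | SR \<Rightarrow> SR' | SR' \<Rightarrow> SR) \<rparr>"

text \<open>TT(T1,T2): junction of C1 and C2 along the bijection i \<mapsto> sigma i of positions,
  with the new edge arising from C1!j and C2!(sigma j) subdivided by the new vertex v,
  which carries a new dangling edge with semiedge r.\<close>
definition TT :: "('v1, 'd1) multipole \<Rightarrow> 'd1 list \<Rightarrow> ('v2, 'd2) multipole \<Rightarrow> 'd2 list \<Rightarrow>
                  (nat \<Rightarrow> nat) \<Rightarrow> nat \<Rightarrow> (('v1 + 'v2) + unit, ('d1 + 'd2) + sdart) multipole" where
  "TT T1 C1 T2 C2 \<sigma> j =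
     junctions (dunion (dunion T1 T2) star)
       ([(Inl (Inl (C1 ! i)), Inl (Inr (C2 ! \<sigma> i))). i \<leftarrow> [0..<3], i \<noteq> j] @
        [(Inl (Inl (C1 ! j)), Inr SP'), (Inl (Inr (C2 ! \<sigma> j)), Inr SQ')])"

end

theory Submission
  imports Defs "HOL-Library.Disjoint_Sets"
begin

text \<open>
  In a colouring of a cubic multipole every edge contributes its colour twice and every vertex
  contributes the sum of all three colours of \<open>K\<close>, both \<open>0\<close> in \<open>\<int>\<^sub>2 \<times> \<int>\<^sub>2\<close>; so the
  flows through the connectors sum to \<open>0\<close>. A colouring of \<open>TT(T\<^sub>1, T\<^sub>2)\<close> splits into
  colourings of \<open>T\<^sub>1\<close>, \<open>T\<^sub>2\<close> and of the new vertex \<open>v\<close> that agree on the junction edges.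
  Then \<open>\<phi>\<^sub>*(B\<^sub>i) = \<phi>\<^sub>*(C\<^sub>i)\<close>, and in \<open>\<phi>\<^sub>*(C\<^sub>1) + \<phi>\<^sub>*(C\<^sub>2)\<close> the two unsubdivided junction edges
  cancel, leaving the two colours at \<open>v\<close> other than \<open>\<phi>(r)\<close>, whose sum is \<open>\<phi>(r)\<close>.
  Properness makes \<open>\<phi>\<^sub>*(B\<^sub>i) = \<phi>(b) + \<phi>(b')\<close> nonzero, i.e. \<open>\<phi>(b) \<noteq> \<phi>(b')\<close>.
  Conversely, if \<open>T\<^sub>1\<close> and \<open>T\<^sub>2\<close> are perfect, colourings of them with prescribed boundary
  colours can be chosen to agree on the junction edges and to fit around \<open>v\<close>.
\<close>

lemma add_self_bit_pair [simp]: "(x :: bit \<times> bit) + x = 0"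
  by (cases x) (simp add: zero_prod_def)

lemma add_eq_0_iff_eq_bit_pair: "(x :: bit \<times> bit) + y = 0 \<longleftrightarrow> x = y"
  by (metis add.assoc add.right_neutral add_self_bit_pair)

lemma in_K_iff: "z \<in> K \<longleftrightarrow> z \<noteq> 0"
  by (cases z) (auto simp: K_def zero_prod_def elim: bit_not_zero_iff[THEN iffD1, elim_format])

section \<open>Flow conservation\<close>

lemma flow_eq_sum_nth: "flow \<phi> S = (\<Sum>i<length S. \<phi> (S ! i))"
  by (simp add: flow_def sum_list_sum_nth atLeast0LessThan)

lemma flow_length_two: "length S = 2 \<Longrightarrow> flow \<phi> S = \<phi> (S ! 0) + \<phi> (S ! 1)"
  by (simp add: flow_eq_sum_nth numeral_2_eq_2)

lemma flow_cong: "(\<And>d. d \<in> set S \<Longrightarrow> \<phi> d = \<psi> d) \<Longrightarrow> flow \<phi> S = flow \<psi> S"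
  by (simp add: flow_def cong: map_cong)

lemma colouring_image_darts_at:
  assumes wf: "wf_multipole M" and col: "colouring M \<phi>" and v: "v \<in> verts M"
  shows "\<phi> ` darts_at M v = K"
proof (rule card_subset_eq)
  show "finite K" "\<phi> ` darts_at M v \<subseteq> K"
    using col by (auto simp: K_def colouring_def darts_at_def)
  show "card (\<phi> ` darts_at M v) = card K"
    using wf col v by (simp add: card_image colouring_def wf_multipole_def K_def)
qed

lemma sum_colouring_darts_at:
  assumes "wf_multipole M" "colouring M \<phi>" "v \<in> verts M"
  shows "sum \<phi> (darts_at M v) = 0"
proof -
  have "inj_on \<phi> (darts_at M v)"
    using assms(2,3) by (simp add: colouring_def)
  then have "sum \<phi> (darts_at M v) = sum id (\<phi> ` darts_at M v)"
    by (simp add: sum.reindex)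
  also have "\<dots> = 0"
    by (simp add: colouring_image_darts_at[OF assms] K_def)
  finally show ?thesis .
qed

lemma sum_colouring_semiedges:
  assumes wf: "wf_multipole M" and col: "colouring M \<phi>"
  shows "sum \<phi> (semiedges M) = 0"
proof -
  have fin: "finite (darts M)" "finite (verts M)"
    using wf by (simp_all add: wf_multipole_def)
  have "sum \<phi> (darts M) = 0"
    by (rule sum_involution_eq_0[where h = "mate M"])
      (use wf col in \<open>auto simp: wf_multipole_def colouring_def\<close>)
  moreover have "darts M - semiedges M = (\<Union>v\<in>verts M. darts_at M v)"
    using wf by (auto simp: wf_multipole_def semiedges_def darts_at_def) (metis option.exhaust)
  then have "sum \<phi> (darts M - semiedges M) = (\<Sum>v\<in>verts M. sum \<phi> (darts_at M v))"
    by (auto intro!: sum.UNION_disjoint simp: fin darts_at_def)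
  moreover have "semiedges M \<subseteq> darts M"
    by (auto simp: semiedges_def)
  ultimately show ?thesis
    using sum.subset_diff[OF _ fin(1), of "semiedges M" \<phi>] sum_colouring_darts_at[OF wf col]
    by simp
qed

lemma sum_list_flow_connectors:
  assumes "is_pole M cs" "colouring M \<phi>"
  shows "(\<Sum>S\<leftarrow>cs. flow \<phi> S) = 0"
proof -
  have "(\<Sum>S\<leftarrow>cs. flow \<phi> S) = sum_list (map \<phi> (concat cs))"
    by (induction cs) (simp_all add: flow_def)
  also have "\<dots> = sum \<phi> (semiedges M)"
    using assms(1) by (simp add: is_pole_def sum_list_distinct_conv_sum_set)
  also have "\<dots> = 0"
    using assms sum_colouring_semiedges by (auto simp: is_pole_def)
  finally show ?thesis .
qed

lemma flow_two_connectors_eq: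
  assumes "is_pole M [B, C]" "colouring M \<phi>"
  shows "flow \<phi> B = flow \<phi> C"
  using sum_list_flow_connectors[OF assms] by (simp add: add_eq_0_iff_eq_bit_pair)

section \<open>Junctions\<close>

lemma junction_simps [simp]:
  "verts (junction M s t) = verts M" "darts (junction M s t) = darts M - {s, t}"
  "vtx (junction M s t) = vtx M"
  "mate (junction M s t) = (mate M)(mate M s := mate M t, mate M t := mate M s)"
  by (simp_all add: junction_def)

lemma semiedges_junction: "semiedges (junction M s t) = semiedges M - {s, t}"
  by (auto simp: semiedges_def junction_def)

lemma darts_at_junction:
  "s \<in> semiedges M \<Longrightarrow> t \<in> semiedges M \<Longrightarrow> darts_at (junction M s t) v = darts_at M v"
  by (auto simp: darts_at_def semiedges_def junction_def)

lemma wf_multipole_junction: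
  assumes wf: "wf_multipole M" and st: "s \<in> semiedges M" "t \<in> semiedges M" "s \<noteq> t"
  shows "wf_multipole (junction M s t)"
proof -
  have "mate (junction M s t) d \<in> darts (junction M s t) \<and> mate (junction M s t) d \<noteq> d
      \<and> mate (junction M s t) (mate (junction M s t) d) = d" if "d \<in> darts (junction M s t)" for d
    using wf st that unfolding wf_multipole_def semiedges_def
    by simp metis
  then show ?thesis
    using wf st by (auto simp: wf_multipole_def darts_at_junction)
qed

lemma colouring_junction:
  assumes st: "s \<in> semiedges M" "t \<in> semiedges M" and "colouring M \<psi>" "\<psi> s = \<psi> t"
  shows "colouring (junction M s t) \<psi>"
  using assms unfolding colouring_def darts_at_junction[OF st]
  by (auto simp: semiedges_def)

lemma colouring_junction_extend:
  assumes wf: "wf_multipole M" and st: "s \<in> semiedges M" "t \<in> semiedges M" "s \<noteq> t"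
    and col: "colouring (junction M s t) \<phi>"
  obtains \<psi> where "colouring M \<psi>" "\<forall>d \<in> darts M - {s, t}. \<psi> d = \<phi> d" "\<psi> s = \<psi> t"
proof -
  \<comment> \<open>If \<open>s\<close> and \<open>t\<close> are the two ends of one edge, the junction deletes that edge altogether,
    so it may be given any colour.\<close>
  define c where "c = (if mate M s = t then (0, 1) else \<phi> (mate M s))"
  define \<psi> where "\<psi> = \<phi>(s := c, t := c)"
  have in_darts: "s \<in> darts M" "t \<in> darts M" and not_at: "s \<notin> darts_at M v" "t \<notin> darts_at M v" for v
    using st by (auto simp: semiedges_def darts_at_def)
  have mate: "\<And>d. d \<in> darts M \<Longrightarrow> mate M d \<in> darts M \<and> mate M d \<noteq> d \<and> mate M (mate M d) = d"
    using wf by (simp add: wf_multipole_def)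
  have col_edge: "\<And>d. d \<in> darts M - {s, t} \<Longrightarrow>
      \<phi> d \<in> K \<and> \<phi> (((mate M)(mate M s := mate M t, mate M t := mate M s)) d) = \<phi> d"
    using col by (simp add: colouring_def)
  have "\<psi> d \<in> K \<and> \<psi> (mate M d) = \<psi> d" if d: "d \<in> darts M" for d
  proof (cases "mate M s = t")
    case True
    then have "mate M t = s"
      using mate[OF in_darts(1)] by simp
    then show ?thesis
      using True col_edge[of d] mate[OF d] d by (auto simp: \<psi>_def c_def K_def)
  next
    case False
    have ms: "mate M s \<in> darts M - {s, t}" "mate M t \<in> darts M - {s, t}" "mate M s \<noteq> mate M t"
      using mate[OF in_darts(1)] mate[OF in_darts(2)] False st(3) by auto
    have c: "c \<in> K" "\<phi> (mate M s) = c" "\<phi> (mate M t) = c"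
      using col_edge[OF ms(1)] ms(3) False by (auto simp: c_def)
    consider "d = s" | "d = t" | "d = mate M s" | "d = mate M t" | "d \<notin> {s, t, mate M s, mate M t}"
      by blast
    then show ?thesis
    proof cases
      case 5
      then have "mate M d \<notin> {s, t}"
        using mate[OF d] by auto
      then show ?thesis
        using 5 col_edge[of d] d by (simp add: \<psi>_def)
    qed (use c ms mate[OF in_darts(1)] mate[OF in_darts(2)] in \<open>simp_all add: \<psi>_def\<close>)
  qed
  moreover have "inj_on \<psi> (darts_at M v)" if "v \<in> verts M" for v
  proof -
    have "inj_on \<psi> (darts_at M v) = inj_on \<phi> (darts_at M v)"
      by (rule inj_on_cong) (use not_at in \<open>auto simp: \<psi>_def\<close>)
    then show ?thesis
      using col that by (simp add: colouring_def darts_at_junction[OF st(1,2)])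
  qed
  ultimately show thesis
    using that[of \<psi>] by (simp add: \<psi>_def colouring_def)
qed

definition junction_ends :: "('d \<times> 'd) list \<Rightarrow> 'd list" where
  "junction_ends ps = map fst ps @ map snd ps"

definition valid_junctions :: "('v, 'd) multipole \<Rightarrow> ('d \<times> 'd) list \<Rightarrow> bool" where
  "valid_junctions M ps \<longleftrightarrow> distinct (junction_ends ps) \<and> set (junction_ends ps) \<subseteq> semiedges M"

lemma valid_junctions_ConsD:
  assumes "valid_junctions M ((s, t) # ps)"
  shows "s \<in> semiedges M" "t \<in> semiedges M" "s \<noteq> t" "valid_junctions (junction M s t) ps"
  using assms by (auto simp: valid_junctions_def junction_ends_def semiedges_junction)

lemma junctions_Nil [simp]: "junctions M [] = M"
  and junctions_Cons [simp]: "junctions M ((s, t) # ps) = junctions (junction M s t) ps"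
  by (simp_all add: junctions_def)

lemma colouring_junctions:
  assumes "valid_junctions M ps" "colouring M \<psi>" "\<forall>(s, t) \<in> set ps. \<psi> s = \<psi> t"
  shows "colouring (junctions M ps) \<psi>"
  using assms
proof (induction ps arbitrary: M)
  case (Cons p ps)
  obtain s t where p: "p = (s, t)"
    by fastforce
  note st = valid_junctions_ConsD[OF Cons.prems(1)[unfolded p]]
  have "colouring (junction M s t) \<psi>"
    using colouring_junction[OF st(1,2) Cons.prems(2)] Cons.prems(3) p by simp
  then show ?case
    using Cons.IH[OF st(4)] Cons.prems(3) p by simp
qed simp

lemma colouring_junctions_extend:
  assumes "wf_multipole M" "valid_junctions M ps" "colouring (junctions M ps) \<phi>"
  obtains \<psi> where "colouring M \<psi>" "\<forall>d \<in> darts M - set (junction_ends ps). \<psi> d = \<phi> d"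
    "\<forall>(s, t) \<in> set ps. \<psi> s = \<psi> t"
  using assms
proof (induction ps arbitrary: M thesis)
  case (Cons p ps)
  obtain s t where p: "p = (s, t)"
    by fastforce
  note st = valid_junctions_ConsD[OF Cons.prems(3)[unfolded p]]
  obtain \<psi>' where \<psi>': "colouring (junction M s t) \<psi>'"
      "\<forall>d \<in> darts M - {s, t} - set (junction_ends ps). \<psi>' d = \<phi> d"
      "\<forall>(s, t) \<in> set ps. \<psi>' s = \<psi>' t"
    using Cons.IH[OF _ wf_multipole_junction[OF Cons.prems(2) st(1-3)] st(4)] Cons.prems(4) p
    by auto
  obtain \<psi> where \<psi>: "colouring M \<psi>" "\<forall>d \<in> darts M - {s, t}. \<psi> d = \<psi>' d" "\<psi> s = \<psi> t"
    using colouring_junction_extend[OF Cons.prems(2) st(1-3) \<psi>'(1)] by blast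
  have ends: "set (junction_ends ps) \<subseteq> darts M - {s, t}"
    using Cons.prems(3) p by (auto simp: valid_junctions_def junction_ends_def semiedges_def)
  have agree: "\<psi> a = \<psi> b" if "(a, b) \<in> set ps" for a b
  proof -
    have "a \<in> darts M - {s, t}" "b \<in> darts M - {s, t}"
      using ends that by (force simp: junction_ends_def)+
    then show ?thesis
      using \<psi>(2) \<psi>'(3) that by auto
  qed
  show ?case
  proof (rule Cons.prems(1)[OF \<psi>(1)])
    show "\<forall>d \<in> darts M - set (junction_ends (p # ps)). \<psi> d = \<phi> d"
      using \<psi>(2) \<psi>'(2) p by (auto simp: junction_ends_def)
    show "\<forall>(a, b) \<in> set (p # ps). \<psi> a = \<psi> b"
      using agree \<psi>(3) p by auto
  qed
qed auto

lemma dunion_simps [simp]: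
  "verts (dunion M N) = Inl ` verts M \<union> Inr ` verts N"
  "darts (dunion M N) = Inl ` darts M \<union> Inr ` darts N"
  "vtx (dunion M N) (Inl d) = map_option Inl (vtx M d)"
  "vtx (dunion M N) (Inr d') = map_option Inr (vtx N d')"
  "mate (dunion M N) (Inl d) = Inl (mate M d)"
  "mate (dunion M N) (Inr d') = Inr (mate N d')"
  by (simp_all add: dunion_def)

lemma darts_at_dunion:
  "darts_at (dunion M N) (Inl v) = Inl ` darts_at M v"
  "darts_at (dunion M N) (Inr v') = Inr ` darts_at N v'"
  by (auto simp: darts_at_def)

lemma semiedges_dunion: "semiedges (dunion M N) = Inl ` semiedges M \<union> Inr ` semiedges N"
  by (auto simp: semiedges_def)

lemma wf_multipole_dunion:
  assumes "wf_multipole M" "wf_multipole N"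
  shows "wf_multipole (dunion M N)"
  using assms by (auto simp: wf_multipole_def darts_at_dunion card_image)

lemma colouring_dunion:
  "colouring (dunion M N) \<phi> \<longleftrightarrow> colouring M (\<phi> \<circ> Inl) \<and> colouring N (\<phi> \<circ> Inr)"
  unfolding colouring_def by (simp add: ball_Un darts_at_dunion inj_on_def) argo

lemma UNIV_sdart: "UNIV = {SP, SP', SQ, SQ', SR, SR'}"
  using sdart.exhaust by auto

lemma star_simps [simp]:
  "verts star = {()}" "darts star = UNIV"
  "mate star SP = SP'" "mate star SP' = SP" "mate star SQ = SQ'" "mate star SQ' = SQ"
  "mate star SR = SR'" "mate star SR' = SR"
  by (simp_all add: star_def)

lemma darts_at_star: "darts_at star v = {SP, SQ, SR}"
  by (auto simp: darts_at_def star_def UNIV_sdart)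

lemma semiedges_star: "semiedges star = {SP', SQ', SR'}"
  by (auto simp: semiedges_def star_def UNIV_sdart)

lemma wf_multipole_star: "wf_multipole star"
  by (auto simp: wf_multipole_def darts_at_star UNIV_sdart)

lemma colouring_star_sum:
  assumes "colouring star \<psi>"
  shows "\<psi> SP' + \<psi> SQ' + \<psi> SR' = 0"
proof -
  have "\<psi> (mate star d) = \<psi> d" for d
    using assms by (simp add: colouring_def)
  from this[of SP] this[of SQ] this[of SR]
  have "\<psi> SP' = \<psi> SP" "\<psi> SQ' = \<psi> SQ" "\<psi> SR' = \<psi> SR"
    by simp_all
  moreover have "sum \<psi> {SP, SQ, SR} = 0"
    using sum_colouring_darts_at[OF wf_multipole_star assms, of "()"] by (simp add: darts_at_star)
  ultimately show ?thesis
    by (simp add: add.assoc)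
qed

lemma colouring_star_exists:
  assumes "a \<in> K" "b \<in> K" "a \<noteq> b"
  shows "\<exists>\<psi>. colouring star \<psi> \<and> \<psi> SP' = a \<and> \<psi> SQ' = b \<and> \<psi> SR' = a + b"
proof -
  define \<psi> where "\<psi> d = (case d of SP \<Rightarrow> a | SP' \<Rightarrow> a | SQ \<Rightarrow> b | SQ' \<Rightarrow> b | _ \<Rightarrow> a + b)" for d
  have "a + b \<in> K" "a + b \<noteq> a" "a + b \<noteq> b"
    using assms by (auto simp: in_K_iff add_eq_0_iff_eq_bit_pair)
  then have "colouring star \<psi>"
    using assms by (auto simp: colouring_def darts_at_star UNIV_sdart \<psi>_def)
  then show ?thesis
    by (auto simp: \<psi>_def)
qed

section \<open>The multipole \<open>TT(T\<^sub>1, T\<^sub>2)\<close>\<close>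

lemma perfect23_colouring_exists:
  assumes "perfect23 T B C" "x1 \<in> K" "x2 \<in> K" "\<forall>i<3. y i \<in> K"
    and "x1 + x2 = y 0 + y 1 + y 2" "x1 + x2 \<noteq> 0"
  shows "\<exists>\<psi>. colouring T \<psi> \<and> \<psi> (B ! 0) = x1 \<and> \<psi> (B ! 1) = x2 \<and> (\<forall>i<3. \<psi> (C ! i) = y i)"
proof -
  have "(x1, x2, y 0, y 1, y 2) \<in> {(x1, x2, y1, y2, y3). x1 \<in> K \<and> x2 \<in> K \<and> y1 \<in> K \<and> y2 \<in> K \<and>
      y3 \<in> K \<and> x1 + x2 = y1 + y2 + y3 \<and> x1 + x2 \<noteq> 0}"
    using assms(2-6) by simp
  also have "\<dots> = {(\<phi> (B!0), \<phi> (B!1), \<phi> (C!0), \<phi> (C!1), \<phi> (C!2)) | \<phi>. colouring T \<phi>}"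
    using assms(1) unfolding perfect23_def by (elim conjE) (rule sym)
  finally obtain \<psi> where "colouring T \<psi>" "\<psi> (B ! 0) = x1" "\<psi> (B ! 1) = x2"
      "\<psi> (C ! 0) = y 0" "\<psi> (C ! 1) = y 1" "\<psi> (C ! 2) = y 2"
    by auto
  moreover have "i < 3 \<longleftrightarrow> i = 0 \<or> i = 1 \<or> i = 2" for i :: nat
    by auto
  ultimately show ?thesis
    by auto
qed

definition TT_pairs ::
    "'d1 list \<Rightarrow> 'd2 list \<Rightarrow> (nat \<Rightarrow> nat) \<Rightarrow> nat \<Rightarrow> ((('d1 + 'd2) + sdart) \<times> (('d1 + 'd2) + sdart)) list"
  where
  "TT_pairs C1 C2 \<sigma> j =
     [(Inl (Inl (C1 ! i)), Inl (Inr (C2 ! \<sigma> i))). i \<leftarrow> [0..<3], i \<noteq> j] @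
     [(Inl (Inl (C1 ! j)), Inr SP'), (Inl (Inr (C2 ! \<sigma> j)), Inr SQ')]"

lemma TT_eq_junctions:
  "TT T1 C1 T2 C2 \<sigma> j = junctions (dunion (dunion T1 T2) star) (TT_pairs C1 C2 \<sigma> j)"
  by (simp add: TT_def TT_pairs_def)

definition TT_compatible ::
    "'d1 list \<Rightarrow> 'd2 list \<Rightarrow> (nat \<Rightarrow> nat) \<Rightarrow> nat \<Rightarrow> ('d1 \<Rightarrow> 'c) \<Rightarrow> ('d2 \<Rightarrow> 'c) \<Rightarrow> (sdart \<Rightarrow> 'c) \<Rightarrow> bool"
  where
  "TT_compatible C1 C2 \<sigma> j \<psi>1 \<psi>2 \<psi>3 \<longleftrightarrow>
     (\<forall>i<3. i \<noteq> j \<longrightarrow> \<psi>1 (C1 ! i) = \<psi>2 (C2 ! \<sigma> i)) \<and>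
     \<psi>1 (C1 ! j) = \<psi>3 SP' \<and> \<psi>2 (C2 ! \<sigma> j) = \<psi>3 SQ'"

lemma TT_pairs_agree_iff:
  "(\<forall>(s, t) \<in> set (TT_pairs C1 C2 \<sigma> j). \<Psi> s = \<Psi> t) \<longleftrightarrow>
     TT_compatible C1 C2 \<sigma> j (\<Psi> \<circ> Inl \<circ> Inl) (\<Psi> \<circ> Inl \<circ> Inr) (\<Psi> \<circ> Inr)"
  by (auto simp: TT_pairs_def TT_compatible_def)

locale TT_setting =
  fixes T1 :: "('v1, 'd1) multipole" and B1 C1 :: "'d1 list"
    and T2 :: "('v2, 'd2) multipole" and B2 C2 :: "'d2 list"
    and \<sigma> :: "nat \<Rightarrow> nat" and j :: nat
  assumes pole1: "is_pole T1 [B1, C1]" and length_C1: "length C1 = 3"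
    and pole2: "is_pole T2 [B2, C2]" and length_C2: "length C2 = 3"
    and sigma: "bij_betw \<sigma> {..<3} {..<3}" and j: "j < 3"
begin

lemma sigma_less: "i < 3 \<Longrightarrow> \<sigma> i < 3"
  using bij_betw_apply[OF sigma] by simp

lemma sigma_eq_iff: "i < 3 \<Longrightarrow> k < 3 \<Longrightarrow> \<sigma> i = \<sigma> k \<longleftrightarrow> i = k"
  using sigma by (auto simp: bij_betw_def inj_on_def)

lemma wf_multipole_components: "wf_multipole (dunion (dunion T1 T2) star)"
  using pole1 pole2 by (simp add: is_pole_def wf_multipole_dunion wf_multipole_star)

lemma valid_TT_pairs: "valid_junctions (dunion (dunion T1 T2) star) (TT_pairs C1 C2 \<sigma> j)"
proof -
  have C1: "distinct C1" "set C1 \<subseteq> semiedges T1" and C2: "distinct C2" "set C2 \<subseteq> semiedges T2"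
    using pole1 pole2 by (auto simp: is_pole_def)
  have "inj_on ((!) C2 \<circ> \<sigma>) {..<3}"
    using sigma C2(1) length_C2 by (auto simp: bij_betw_def intro!: comp_inj_on inj_on_nth)
  then have "distinct (map ((!) C2 \<circ> \<sigma>) [0..<3])"
    by (simp add: distinct_map atLeast0LessThan)
  moreover obtain c0 c1 c2 where "C1 = [c0, c1, c2]"
    using length_C1 by (auto simp: numeral_3_eq_3 length_Suc_conv)
  moreover have "j = 0 \<or> j = 1 \<or> j = 2"
    using j by auto
  moreover have "C2 ! \<sigma> i \<in> semiedges T2" if "i < 3" for i
    using C2(2) nth_mem[of "\<sigma> i" C2] sigma_less[OF that] length_C2 by auto
  ultimately show ?thesis
    using C1 j by (auto simp: valid_junctions_def junction_ends_def TT_pairs_def semiedges_dunion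
        semiedges_star upt_rec numeral_2_eq_2)
qed

lemma TT_boundary_not_junction_end:
  shows "d \<in> set B1 \<Longrightarrow> Inl (Inl d) \<notin> set (junction_ends (TT_pairs C1 C2 \<sigma> j))"
    and "d' \<in> set B2 \<Longrightarrow> Inl (Inr d') \<notin> set (junction_ends (TT_pairs C1 C2 \<sigma> j))"
    and "Inr SR' \<notin> set (junction_ends (TT_pairs C1 C2 \<sigma> j))"
proof -
  have "set B1 \<inter> set C1 = {}" "set B2 \<inter> set C2 = {}"
    using pole1 pole2 by (auto simp: is_pole_def)
  moreover have "C1 ! i \<in> set C1" "C2 ! \<sigma> i \<in> set C2" if "i < 3" for i
    using that sigma_less[OF that] length_C1 length_C2 by simp_all
  ultimately show "d \<in> set B1 \<Longrightarrow> Inl (Inl d) \<notin> set (junction_ends (TT_pairs C1 C2 \<sigma> j))"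
    and "d' \<in> set B2 \<Longrightarrow> Inl (Inr d') \<notin> set (junction_ends (TT_pairs C1 C2 \<sigma> j))"
    and "Inr SR' \<notin> set (junction_ends (TT_pairs C1 C2 \<sigma> j))"
    using j by (auto simp: junction_ends_def TT_pairs_def)
qed

lemma TT_colouring_join:
  assumes "colouring T1 \<psi>1" "colouring T2 \<psi>2" "colouring star \<psi>3"
    and "TT_compatible C1 C2 \<sigma> j \<psi>1 \<psi>2 \<psi>3"
  shows "colouring (TT T1 C1 T2 C2 \<sigma> j) (case_sum (case_sum \<psi>1 \<psi>2) \<psi>3)"
  unfolding TT_eq_junctions
proof (rule colouring_junctions[OF valid_TT_pairs])
  show "colouring (dunion (dunion T1 T2) star) (case_sum (case_sum \<psi>1 \<psi>2) \<psi>3)"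
    using assms(1-3) by (simp add: colouring_dunion comp_def)
  show "\<forall>(s, t) \<in> set (TT_pairs C1 C2 \<sigma> j).
      case_sum (case_sum \<psi>1 \<psi>2) \<psi>3 s = case_sum (case_sum \<psi>1 \<psi>2) \<psi>3 t"
    using assms(4) by (simp add: TT_pairs_agree_iff comp_def)
qed

lemma TT_colouring_split:
  assumes "colouring (TT T1 C1 T2 C2 \<sigma> j) \<phi>"
  obtains \<psi>1 \<psi>2 \<psi>3 where "colouring T1 \<psi>1" "colouring T2 \<psi>2" "colouring star \<psi>3"
    "TT_compatible C1 C2 \<sigma> j \<psi>1 \<psi>2 \<psi>3"
    "\<forall>d \<in> set B1. \<psi>1 d = \<phi> (Inl (Inl d))" "\<forall>d \<in> set B2. \<psi>2 d = \<phi> (Inl (Inr d))"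
    "\<psi>3 SR' = \<phi> (Inr SR')"
proof -
  obtain \<Psi> where \<Psi>: "colouring (dunion (dunion T1 T2) star) \<Psi>"
      "\<forall>d \<in> darts (dunion (dunion T1 T2) star) - set (junction_ends (TT_pairs C1 C2 \<sigma> j)). \<Psi> d = \<phi> d"
      "\<forall>(s, t) \<in> set (TT_pairs C1 C2 \<sigma> j). \<Psi> s = \<Psi> t"
    using colouring_junctions_extend[OF wf_multipole_components valid_TT_pairs
        assms[unfolded TT_eq_junctions]] .
  have "set B1 \<subseteq> darts T1" "set B2 \<subseteq> darts T2"
    using pole1 pole2 by (auto simp: is_pole_def semiedges_def)
  show thesis
  proof (rule that[of "\<Psi> \<circ> Inl \<circ> Inl" "\<Psi> \<circ> Inl \<circ> Inr" "\<Psi> \<circ> Inr"])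
    show "colouring T1 (\<Psi> \<circ> Inl \<circ> Inl)" "colouring T2 (\<Psi> \<circ> Inl \<circ> Inr)" "colouring star (\<Psi> \<circ> Inr)"
      using \<Psi>(1) by (simp_all add: colouring_dunion)
    show "TT_compatible C1 C2 \<sigma> j (\<Psi> \<circ> Inl \<circ> Inl) (\<Psi> \<circ> Inl \<circ> Inr) (\<Psi> \<circ> Inr)"
      using \<Psi>(3) TT_pairs_agree_iff by blast
    show "\<forall>d \<in> set B1. (\<Psi> \<circ> Inl \<circ> Inl) d = \<phi> (Inl (Inl d))"
      "\<forall>d \<in> set B2. (\<Psi> \<circ> Inl \<circ> Inr) d = \<phi> (Inl (Inr d))" "(\<Psi> \<circ> Inr) SR' = \<phi> (Inr SR')"
      using \<Psi>(2) TT_boundary_not_junction_end \<open>set B1 \<subseteq> darts T1\<close> \<open>set B2 \<subseteq> darts T2\<close>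
      by auto
  qed
qed

lemma TT_compatible_flow:
  fixes \<psi>1 :: "'d1 \<Rightarrow> bit \<times> bit"
  assumes "TT_compatible C1 C2 \<sigma> j \<psi>1 \<psi>2 \<psi>3"
  shows "flow \<psi>1 C1 + flow \<psi>2 C2 = \<psi>3 SP' + \<psi>3 SQ'"
proof -
  have "flow \<psi>2 C2 = (\<Sum>i<3. \<psi>2 (C2 ! \<sigma> i))"
    using sum.reindex_bij_betw[OF sigma, of "\<lambda>k. \<psi>2 (C2 ! k)"]
    by (simp add: flow_eq_sum_nth length_C2)
  then have "flow \<psi>1 C1 + flow \<psi>2 C2 = (\<Sum>i<3. \<psi>1 (C1 ! i) + \<psi>2 (C2 ! \<sigma> i))"
    by (simp add: flow_eq_sum_nth length_C1 sum.distrib)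
  also have "\<dots> = \<psi>1 (C1 ! j) + \<psi>2 (C2 ! \<sigma> j) + (\<Sum>i \<in> {..<3} - {j}. \<psi>1 (C1 ! i) + \<psi>2 (C2 ! \<sigma> i))"
    using j by (intro sum.remove) auto
  also have "(\<Sum>i \<in> {..<3} - {j}. \<psi>1 (C1 ! i) + \<psi>2 (C2 ! \<sigma> i)) = 0"
    using assms by (intro sum.neutral) (auto simp: TT_compatible_def)
  finally show ?thesis
    using assms by (simp add: TT_compatible_def)
qed

lemma TT_boundary_flow_sum:
  assumes "colouring (TT T1 C1 T2 C2 \<sigma> j) \<phi>"
  shows "flow (\<phi> \<circ> Inl \<circ> Inl) B1 + flow (\<phi> \<circ> Inl \<circ> Inr) B2 + \<phi> (Inr SR') = 0"
proof -
  obtain \<psi>1 \<psi>2 \<psi>3 where \<psi>: "colouring T1 \<psi>1" "colouring T2 \<psi>2" "colouring star \<psi>3"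
      "TT_compatible C1 C2 \<sigma> j \<psi>1 \<psi>2 \<psi>3"
      "\<forall>d \<in> set B1. \<psi>1 d = \<phi> (Inl (Inl d))" "\<forall>d \<in> set B2. \<psi>2 d = \<phi> (Inl (Inr d))"
      "\<psi>3 SR' = \<phi> (Inr SR')"
    using TT_colouring_split[OF assms] by blast
  have "flow (\<phi> \<circ> Inl \<circ> Inl) B1 = flow \<psi>1 B1"
    using \<psi>(5) by (intro flow_cong) simp
  also have "\<dots> = flow \<psi>1 C1"
    by (rule flow_two_connectors_eq[OF pole1 \<psi>(1)])
  finally have flow1: "flow (\<phi> \<circ> Inl \<circ> Inl) B1 = flow \<psi>1 C1" .
  have "flow (\<phi> \<circ> Inl \<circ> Inr) B2 = flow \<psi>2 B2"
    using \<psi>(6) by (intro flow_cong) simp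
  also have "\<dots> = flow \<psi>2 C2"
    by (rule flow_two_connectors_eq[OF pole2 \<psi>(2)])
  finally have flow2: "flow (\<phi> \<circ> Inl \<circ> Inr) B2 = flow \<psi>2 C2" .
  have "flow (\<phi> \<circ> Inl \<circ> Inl) B1 + flow (\<phi> \<circ> Inl \<circ> Inr) B2 + \<phi> (Inr SR') =
      \<psi>3 SP' + \<psi>3 SQ' + \<psi>3 SR'"
    unfolding flow1 flow2 \<psi>(7)[symmetric] TT_compatible_flow[OF \<psi>(4)] ..
  then show ?thesis
    using colouring_star_sum[OF \<psi>(3)] by simp
qed

lemma TT_boundary_flow_nonzero:
  assumes "proper23 T1 B1 C1" "proper23 T2 B2 C2" "colouring (TT T1 C1 T2 C2 \<sigma> j) \<phi>"
  shows "flow (\<phi> \<circ> Inl \<circ> Inl) B1 \<noteq> 0" "flow (\<phi> \<circ> Inl \<circ> Inr) B2 \<noteq> 0"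
proof -
  obtain \<psi>1 \<psi>2 \<psi>3 where \<psi>: "colouring T1 \<psi>1" "colouring T2 \<psi>2" "colouring star \<psi>3"
      "TT_compatible C1 C2 \<sigma> j \<psi>1 \<psi>2 \<psi>3"
      "\<forall>d \<in> set B1. \<psi>1 d = \<phi> (Inl (Inl d))" "\<forall>d \<in> set B2. \<psi>2 d = \<phi> (Inl (Inr d))"
      "\<psi>3 SR' = \<phi> (Inr SR')"
    using TT_colouring_split[OF assms(3)] by blast
  have "flow (\<phi> \<circ> Inl \<circ> Inl) B1 = flow \<psi>1 B1" "flow (\<phi> \<circ> Inl \<circ> Inr) B2 = flow \<psi>2 B2"
    using \<psi>(5,6) by (intro flow_cong; simp)+
  then show "flow (\<phi> \<circ> Inl \<circ> Inl) B1 \<noteq> 0" "flow (\<phi> \<circ> Inl \<circ> Inr) B2 \<noteq> 0"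
    using assms(1,2) \<psi>(1,2) unfolding proper23_def by metis+
qed

lemma TT_boundary_colourable:
  fixes x1 x2 y1 y2 e :: "bit \<times> bit"
  assumes perfect: "perfect23 T1 B1 C1" "perfect23 T2 B2 C2"
    and K: "x1 \<in> K" "x2 \<in> K" "y1 \<in> K" "y2 \<in> K" "e \<in> K"
    and nonzero: "x1 + x2 \<noteq> 0" "y1 + y2 \<noteq> 0" and sum: "x1 + x2 + y1 + y2 + e = 0"
  shows "\<exists>\<phi>. colouring (TT T1 C1 T2 C2 \<sigma> j) \<phi> \<and>
    \<phi> (Inl (Inl (B1 ! 0))) = x1 \<and> \<phi> (Inl (Inl (B1 ! 1))) = x2 \<and>
    \<phi> (Inl (Inr (B2 ! 0))) = y1 \<and> \<phi> (Inl (Inr (B2 ! 1))) = y2 \<and> \<phi> (Inr SR') = e"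
proof -
  define x y where "x = x1 + x2" and "y = y1 + y2"
  have xy: "x \<in> K" "y \<in> K" "x \<noteq> y" "e = x + y"
    using K(5) nonzero sum by (auto simp: x_def y_def in_K_iff add_eq_0_iff_eq_bit_pair add.assoc)
  obtain \<psi>3 where \<psi>3: "colouring star \<psi>3" "\<psi>3 SP' = x" "\<psi>3 SQ' = y" "\<psi>3 SR' = e"
    using colouring_star_exists[OF xy(1-3)] xy(4) by blast
  \<comment> \<open>Every junction edge not through \<open>v\<close> gets colour \<open>x\<close>: all of \<open>C\<^sub>1\<close> is coloured \<open>x\<close>, and
    \<open>C\<^sub>2\<close> is coloured \<open>x\<close> except for \<open>y\<close> on the edge to \<open>v\<close>.\<close>
  have "x1 + x2 = x + x + x" "\<forall>i<3. x \<in> K"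
    using xy(1) by (simp_all add: x_def)
  then obtain \<psi>1 where \<psi>1: "colouring T1 \<psi>1" "\<psi>1 (B1 ! 0) = x1" "\<psi>1 (B1 ! 1) = x2"
      "\<forall>i<3. \<psi>1 (C1 ! i) = x"
    using perfect23_colouring_exists[OF perfect(1) K(1,2), of "\<lambda>_. x"] nonzero(1) by blast
  define g where "g k = (if k = \<sigma> j then y else x)" for k
  have "\<sigma> j = 0 \<or> \<sigma> j = 1 \<or> \<sigma> j = 2"
    using sigma_less[OF j] by auto
  then have "y1 + y2 = g 0 + g 1 + g 2" "\<forall>k<3. g k \<in> K"
    using xy(1,2) by (auto simp: y_def g_def add_ac)
  then obtain \<psi>2 where \<psi>2: "colouring T2 \<psi>2" "\<psi>2 (B2 ! 0) = y1" "\<psi>2 (B2 ! 1) = y2"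
      "\<forall>k<3. \<psi>2 (C2 ! k) = g k"
    using perfect23_colouring_exists[OF perfect(2) K(3,4), of g] nonzero(2) by blast
  have "TT_compatible C1 C2 \<sigma> j \<psi>1 \<psi>2 \<psi>3"
    unfolding TT_compatible_def
  proof (intro conjI allI impI)
    fix i :: nat assume "i < 3" "i \<noteq> j"
    then show "\<psi>1 (C1 ! i) = \<psi>2 (C2 ! \<sigma> i)"
      using \<psi>1(4) \<psi>2(4) sigma_less sigma_eq_iff[OF _ j] by (simp add: g_def)
  qed (use \<psi>1(4) \<psi>2(4) \<psi>3(2,3) j sigma_less[OF j] in \<open>simp_all add: g_def\<close>)
  then have "colouring (TT T1 C1 T2 C2 \<sigma> j) (case_sum (case_sum \<psi>1 \<psi>2) \<psi>3)"
    using TT_colouring_join \<psi>1(1) \<psi>2(1) \<psi>3(1) by blast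
  then show ?thesis
    using \<psi>1(2,3) \<psi>2(2,3) \<psi>3(4) by (intro exI[of _ "case_sum (case_sum \<psi>1 \<psi>2) \<psi>3"]) simp
qed

end

theorem mainTheorem3:
  fixes T1 :: "('v1, 'd1) multipole" and B1 C1 :: "'d1 list"
    and T2 :: "('v2, 'd2) multipole" and B2 C2 :: "'d2 list"
    and \<sigma> :: "nat \<Rightarrow> nat" and j :: nat
  assumes P1: "proper23 T1 B1 C1"
    and P2: "proper23 T2 B2 C2"
    and sigma: "bij_betw \<sigma> {..<3} {..<3}"
    and j: "j < 3"
  defines "M \<equiv> TT T1 C1 T2 C2 \<sigma> j"
    and "b \<equiv> Inl (Inl (B1 ! 0))" and "b' \<equiv> Inl (Inl (B1 ! 1))"
    and "c \<equiv> Inl (Inr (B2 ! 0))" and "c' \<equiv> Inl (Inr (B2 ! 1))"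
    and "r \<equiv> Inr SR'"
  shows "(\<forall>\<phi>. colouring M \<phi> \<longrightarrow>
            \<phi> b \<noteq> \<phi> b' \<and> \<phi> c \<noteq> \<phi> c' \<and> \<phi> b + \<phi> b' + \<phi> c + \<phi> c' + \<phi> r = 0)
       \<and> (perfect23 T1 B1 C1 \<and> perfect23 T2 B2 C2 \<longrightarrow>
            (\<forall>a1 a2 d1 d2 e. a1 \<in> K \<and> a2 \<in> K \<and> d1 \<in> K \<and> d2 \<in> K \<and> e \<in> K \<and>
               a1 \<noteq> a2 \<and> d1 \<noteq> d2 \<and> a1 + a2 + d1 + d2 + e = 0 \<longrightarrow>
               (\<exists>\<phi>. colouring M \<phi> \<and> \<phi> b = a1 \<and> \<phi> b' = a2 \<and> \<phi> c = d1 \<and> \<phi> c' = d2 \<and> \<phi> r = e)))"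
proof -
  interpret TT_setting T1 B1 C1 T2 B2 C2 \<sigma> j
    using P1 P2 sigma j by unfold_locales (simp_all add: proper23_def)
  have flows: "flow (\<phi> \<circ> Inl \<circ> Inl) B1 = \<phi> b + \<phi> b'" "flow (\<phi> \<circ> Inl \<circ> Inr) B2 = \<phi> c + \<phi> c'" for \<phi>
    using P1 P2 by (simp_all add: proper23_def flow_length_two b_def b'_def c_def c'_def)
  show ?thesis
  proof (rule conjI; intro allI impI)
    fix \<phi> assume "colouring M \<phi>"
    then show "\<phi> b \<noteq> \<phi> b' \<and> \<phi> c \<noteq> \<phi> c' \<and> \<phi> b + \<phi> b' + \<phi> c + \<phi> c' + \<phi> r = 0"
      using TT_boundary_flow_sum TT_boundary_flow_nonzero[OF P1 P2] unfolding M_def r_def flows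
      by (simp add: add_eq_0_iff_eq_bit_pair add.assoc)
  next
    fix a1 a2 d1 d2 e :: "bit \<times> bit"
    assume "perfect23 T1 B1 C1 \<and> perfect23 T2 B2 C2"
      and "a1 \<in> K \<and> a2 \<in> K \<and> d1 \<in> K \<and> d2 \<in> K \<and> e \<in> K \<and> a1 \<noteq> a2 \<and> d1 \<noteq> d2 \<and> a1 + a2 + d1 + d2 + e = 0"
    then show "\<exists>\<phi>. colouring M \<phi> \<and> \<phi> b = a1 \<and> \<phi> b' = a2 \<and> \<phi> c = d1 \<and> \<phi> c' = d2 \<and> \<phi> r = e"
      unfolding M_def b_def b'_def c_def c'_def r_def
      by (intro TT_boundary_colourable) (auto simp: add_eq_0_iff_eq_bit_pair)
  qed
qed

end
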